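(* Let $\alpha,\beta$ be parameters, $q$ an indeterminate, $E_{n,k}(\alpha,\beta,q)$ the numbers defined in the context, and $E_n(x;q)=\sum_{k=0}^nE_{n,k}(\alpha,\beta,q)x^k$. Then: (i) for $n\ge1$, $E_{n}(x;q)=\bigl([\beta]+q^\beta[n-1+\alpha]x\bigr)E_{n-1}(x;q)+(1-x)xq^{\beta}\delta_{x}(E_{n-1}(x;q))$; (ii) for $n\ge0$, $\dfrac{E_{n}(x;q)}{(x;q)_{n+\alpha+\beta}}=\sum_{j\ge 0}x^j\begin{bmatrix}j+\alpha+\beta-1\\ j\end{bmatrix}[j+\beta]^n$; (iii) $\displaystyle\sum_{n\ge 0}\frac{E_{n}(x;q)}{(x;q)_{n+\alpha+\beta}}\frac{t^n}{n!}=\sum_{j\ge 0}x^j\begin{bmatrix}j+\alpha+\beta-1\\ j\end{bmatrix}\exp([j+\beta]t)$; (iv) for $n,j\ge0$, $\displaystyle\sum_{k=0}^{j}\begin{bmatrix}j-k+n+\alpha+\beta-1\\ j-k\end{bmatrix}E_{n,k}(\alpha,\beta,q)=\begin{bmatrix}j+\alpha+\beta-1\\ j\end{bmatrix}[j+\beta]^n$; (v) for $n\ge k\ge0$, $\displaystyle E_{n,k}(\alpha,\beta,q)=\sum_{j=0}^{k}\begin{bmatrix}n+\alpha+\beta\\ k-j\end{bmatrix}\begin{bmatrix}j+\alpha+\beta-1\\ j\end{bmatrix}(-1)^{k-j}q^{\binom{k-j}{2}}[\beta+j]^{n}$.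
   Context: For a real $x$, $[x]=\frac{1-q^x}{1-q}$. The numbers $E_{n,k}(\alpha,\beta,q)$ are determined by $E_{0,0}=1$, $E_{n,k}=0$ if $k\notin\{0,\dots,n\}$, and for $n\ge1$: $E_{n,k}(\alpha,\beta,q)=q^{\beta+k-1}[n-k+\alpha]E_{n-1,k-1}(\alpha,\beta,q)+[k+\beta]E_{n-1,k}(\alpha,\beta,q)$. The $q$-derivative is $\delta_x p(x)=\frac{p(qx)-p(x)}{(q-1)x}$. $q$-Pochhammer: $(x;q)_\infty=\prod_{i\ge0}(1-xq^i)$ and for real $N$, $(x;q)_N=(x;q)_\infty/(xq^N;q)_\infty$ (so $(x;q)_0=1$, $(x;q)_n=\prod_{i=0}^{n-1}(1-xq^i)$ for integers $n\ge1$). For real $x$ and integer $n\ge0$, $\begin{bmatrix}x\\ n\end{bmatrix}=\frac{(q^{x-n+1};q)_n}{(q;q)_n}$. *)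

theory Defs
  imports "HOL-Analysis.Analysis"
begin

definition qint :: "real \<Rightarrow> real \<Rightarrow> real" where
  "qint q x = (1 - q powr x) / (1 - q)"

fun qE :: "real \<Rightarrow> real \<Rightarrow> real \<Rightarrow> nat \<Rightarrow> nat \<Rightarrow> real" where
  "qE a b q 0 k = (if k = 0 then 1 else 0)"
| "qE a b q (Suc n) k =
     (if k \<le> Suc n then
        (if k = 0 then 0
         else q powr (b + real k - 1) * qint q (real (Suc n) - real k + a) * qE a b q n (k - 1))
        + qint q (real k + b) * qE a b q n k
      else 0)"

definition qEpoly :: "real \<Rightarrow> real \<Rightarrow> real \<Rightarrow> nat \<Rightarrow> real \<Rightarrow> real" where
  "qEpoly a b q n x = (\<Sum>k\<le>n. qE a b q n k * x ^ k)"

definition qderiv :: "real \<Rightarrow> (real \<Rightarrow> real) \<Rightarrow> real \<Rightarrow> real" where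
  "qderiv q p x = (p (q * x) - p x) / ((q - 1) * x)"

definition qpoch_inf :: "real \<Rightarrow> real \<Rightarrow> real" where
  "qpoch_inf x q = (\<Prod>i. (1 - x * q ^ i))"

definition qpoch :: "real \<Rightarrow> real \<Rightarrow> real \<Rightarrow> real" where
  "qpoch x q N = qpoch_inf x q / qpoch_inf (x * q powr N) q"

definition qpoch_fin :: "real \<Rightarrow> real \<Rightarrow> nat \<Rightarrow> real" where
  "qpoch_fin x q n = (\<Prod>i<n. (1 - x * q ^ i))"

definition qbinom :: "real \<Rightarrow> real \<Rightarrow> nat \<Rightarrow> real" where
  "qbinom q x n = qpoch_fin (q powr (x - real n + 1)) q n / qpoch_fin q q n"

end

(*
  Writing g_M(m) = (q^M;q)_m / (q;q)_m, so that 1/(x;q)_M = sum_m g_M(m) x^m by the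
  q-binomial theorem, identity (iv) says that the coefficients of E_n(x)/(x;q)_{n+alpha+beta}
  are g_{alpha+beta}(j) [j+beta]^n.  It is proved by induction on n from the recurrence for
  E_{n,k}; the induction step is a Pascal-type identity for g_M.  Then (ii) is (iv) read as a
  Cauchy product, (iii) follows from (ii) by exchanging two absolutely convergent sums, and
  (v) inverts (iv): the series sum_m g_N(m) x^m and sum_m [N,m] (-1)^m q^(m choose 2) x^m
  are inverse formal power series, because their product C satisfies C(qx) = C(x).
  Identity (i) is the recurrence for E_{n,k} written for the generating polynomial, using
  x delta_x x^k = [k] x^k.
*)
theory Submission
  imports Defs "HOL-Computational_Algebra.Formal_Power_Series"
begin

lemma qint_add:
  assumes "0 < q" "q \<noteq> 1"
  shows "qint q (x + y) = qint q x + q powr x * qint q y"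
  using assms unfolding qint_def by (simp add: powr_add field_simps)

lemma qint_of_nat: "0 < q \<Longrightarrow> qint q (real k) = (1 - q ^ k) / (1 - q)"
  unfolding qint_def by (simp add: powr_realpow)

lemma power_neq_one:
  fixes q :: real
  assumes "0 < q" "q \<noteq> 1" "0 < n"
  shows "q ^ n \<noteq> 1"
  using assms power_eq_1_iff[of q n] by auto

lemma qderiv_polynomial:
  assumes "0 < q" "q \<noteq> 1"
  shows "x * qderiv q (\<lambda>y. \<Sum>k\<le>m. c k * y ^ k) x = (\<Sum>k\<le>m. c k * qint q (real k) * x ^ k)"
proof (cases "x = 0")
  case True
  \<comment> \<open>both sides vanish: \<open>qderiv\<close> divides by zero and \<open>qint q 0 = 0\<close>\<close>
  have "(\<Sum>k\<le>m. c k * qint q (real k) * x ^ k) = c 0 * qint q 0"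
    using True by (simp add: zero_power sum.atMost_shift del: sum.atMost_Suc)
  then show ?thesis using True assms by (simp add: qint_def)
next
  case False
  let ?p = "\<lambda>y. \<Sum>k\<le>m. c k * y ^ k"
  have "x * qderiv q ?p x = (?p (q * x) - ?p x) / (q - 1)"
    using False assms by (simp add: qderiv_def field_simps)
  also have "\<dots> = (\<Sum>k\<le>m. c k * ((q * x) ^ k - x ^ k)) / (q - 1)"
    by (simp add: sum_subtractf[symmetric] algebra_simps)
  also have "\<dots> = (\<Sum>k\<le>m. c k * qint q (real k) * x ^ k)"
    using assms unfolding sum_divide_distrib
    by (intro sum.cong) (simp_all add: qint_of_nat power_mult_distrib field_simps)
  finally show ?thesis .
qed

lemma qE_eq_0: "n < k \<Longrightarrow> qE a b q n k = 0"
  by (induction n arbitrary: k) auto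

lemma qE_Suc:
  "qE a b q (Suc n) k =
     (if k = 0 then 0
      else q powr (b + real k - 1) * qint q (real (Suc n) - real k + a) * qE a b q n (k - 1))
     + qint q (real k + b) * qE a b q n k"
  by (cases "k \<le> Suc n") (auto simp: qE_eq_0)

lemma qEpoly_Suc:
  assumes q: "0 < q" "q \<noteq> 1"
  shows "qEpoly a b q (Suc m) x =
        (qint q b + q powr b * qint q (real m + a) * x) * qEpoly a b q m x
        + (1 - x) * x * q powr b * qderiv q (\<lambda>y. qEpoly a b q m y) x"
proof -
  let ?E = "qE a b q m"
  have shift: "q powr (b + real k) * qint q (real m - real k + a)
      = q powr b * (qint q (real m + a) - qint q (real k))" for k
    using qint_add[OF q, of "real k" "real m - real k + a"] by (simp add: powr_add algebra_simps)
  have split: "qint q (real k + b) = qint q b + q powr b * qint q (real k)" for k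
    using qint_add[OF q, of b "real k"] by (simp add: add.commute)
  have "qEpoly a b q (Suc m) x
      = (\<Sum>k\<le>Suc m. (if k = 0 then 0 else q powr (b + real k - 1)
           * qint q (real (Suc m) - real k + a) * ?E (k - 1)) * x ^ k)
        + (\<Sum>k\<le>Suc m. qint q (real k + b) * ?E k * x ^ k)"
    by (simp add: qEpoly_def qE_Suc distrib_right sum.distrib mult.assoc)
  also have "\<dots> = (\<Sum>k\<le>m. q powr (b + real k) * qint q (real m - real k + a) * ?E k * x ^ Suc k)
        + (\<Sum>k\<le>m. qint q (real k + b) * ?E k * x ^ k)"
    by (subst sum.atMost_Suc_shift) (simp add: qE_eq_0 algebra_simps)
  also have "\<dots> = (\<Sum>k\<le>m. q powr b * (qint q (real m + a) - qint q (real k)) * ?E k * x ^ Suc k)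
        + (\<Sum>k\<le>m. (qint q b + q powr b * qint q (real k)) * ?E k * x ^ k)"
    unfolding shift split ..
  also have "\<dots> = (qint q b + q powr b * qint q (real m + a) * x) * qEpoly a b q m x
        + (1 - x) * q powr b * (\<Sum>k\<le>m. ?E k * qint q (real k) * x ^ k)"
    unfolding qEpoly_def
    by (simp add: sum_distrib_left sum_distrib_right sum.distrib[symmetric]
        sum_subtractf[symmetric] algebra_simps)
  also have "\<dots> = (qint q b + q powr b * qint q (real m + a) * x) * qEpoly a b q m x
        + (1 - x) * x * q powr b * qderiv q (\<lambda>y. qEpoly a b q m y) x"
    using qderiv_polynomial[OF q, of x "qE a b q m" m] by (simp add: qEpoly_def)
  finally show ?thesis .
qed

text \<open>The coefficient of \<open>x^m\<close> in \<open>1/(x;q)\<^sub>M\<close>, see \<open>q_binomial_theorem\<close>.\<close>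
definition qbin_coeff :: "real \<Rightarrow> real \<Rightarrow> nat \<Rightarrow> real" where
  "qbin_coeff q M m = qpoch_fin (q powr M) q m / qpoch_fin q q m"

lemma qbinom_eq_qbin_coeff: "qbinom q (real m + M - 1) m = qbin_coeff q M m"
  unfolding qbinom_def qbin_coeff_def by simp

lemma qbin_coeff_0 [simp]: "qbin_coeff q M 0 = 1"
  unfolding qbin_coeff_def qpoch_fin_def by simp

lemma qpoch_fin_q_neq_0: "0 < q \<Longrightarrow> q \<noteq> 1 \<Longrightarrow> qpoch_fin q q m \<noteq> 0"
  unfolding qpoch_fin_def using power_neq_one[of q "Suc _"] by (simp add: prod_zero_iff)

lemma qbin_coeff_Suc:
  assumes q: "0 < q" "q \<noteq> 1"
  shows "qbin_coeff q M (Suc m) * (1 - q ^ Suc m) = qbin_coeff q M m * (1 - q powr M * q ^ m)"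
  using qpoch_fin_q_neq_0[OF q, of m] power_neq_one[OF q, of "Suc m"]
  unfolding qbin_coeff_def qpoch_fin_def by (simp add: field_simps)

lemma qbin_coeff_pascal:
  assumes q: "0 < q" "q \<noteq> 1"
  shows "qbin_coeff q (N + 1) p * (qint q N - qint q B) + qbin_coeff q (N + 1) (Suc p) * qint q B
       = qbin_coeff q N (Suc p) * qint q (real (Suc p) + B)"
proof -
  define P where "P = qpoch_fin (q powr (N + 1)) q p"
  define F where "F = qpoch_fin q q p"
  have F: "F \<noteq> 0" using qpoch_fin_q_neq_0[OF q] F_def by simp
  have nz: "1 - q ^ Suc p \<noteq> 0" using power_neq_one[OF q, of "Suc p"] by simp
  have F1: "qpoch_fin q q (Suc p) = F * (1 - q ^ Suc p)"
    unfolding F_def qpoch_fin_def by simp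
  have P1: "qpoch_fin (q powr (N + 1)) q (Suc p) = P * (1 - q powr (N + 1) * q ^ p)"
    unfolding P_def qpoch_fin_def by simp
  have P2: "qpoch_fin (q powr N) q (Suc p) = (1 - q powr N) * P"
    unfolding P_def qpoch_fin_def prod.lessThan_Suc_shift
    using q by (simp add: powr_add mult.assoc)
  have scalar: "(1 - q ^ Suc p) * (qint q N - qint q B) + (1 - q powr (N + 1) * q ^ p) * qint q B
       = (1 - q powr N) * qint q (real (Suc p) + B)"
  proof -
    have "(1 - q * Z) * ((1 - X) - (1 - Y)) + (1 - X * q * Z) * (1 - Y) = (1 - X) * (1 - q * Z * Y)"
      for X Y Z :: real
      by (simp add: algebra_simps)
    from this[of "q ^ p" "q powr N" "q powr B"] show ?thesis
      unfolding qint_def using q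
      by (simp add: powr_add powr_realpow diff_divide_distrib[symmetric]
          add_divide_distrib[symmetric] mult.assoc)
  qed
  have "qbin_coeff q (N + 1) p * (qint q N - qint q B) + qbin_coeff q (N + 1) (Suc p) * qint q B
      = P / F * ((1 - q ^ Suc p) * (qint q N - qint q B)
          + (1 - q powr (N + 1) * q ^ p) * qint q B) / (1 - q ^ Suc p)"
    unfolding qbin_coeff_def P1 F1 using F nz by (simp add: P_def F_def field_simps)
  also have "\<dots> = qbin_coeff q N (Suc p) * qint q (real (Suc p) + B)"
    unfolding scalar qbin_coeff_def P2 F1 using F nz by (simp add: field_simps)
  finally show ?thesis .
qed

lemma qE_Suc_convolution:
  assumes q: "0 < q" "q \<noteq> 1"
  shows "(\<Sum>k\<le>j. qbin_coeff q (real n + a + b + 1) (j - k) * qE a b q (Suc n) k)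
       = (\<Sum>k\<le>j. qbin_coeff q (real n + a + b) (j - k) * qE a b q n k) * qint q (real j + b)"
proof (cases j)
  case 0
  then show ?thesis by (simp add: qE_Suc)
next
  case (Suc i)
  define N where "N = real n + a + b"
  let ?E = "qE a b q n" and ?g = "qbin_coeff q N" and ?g' = "qbin_coeff q (N + 1)"
  have shift: "q powr (b + real k) * (qint q (real n - real k + a) * y) = (qint q N - qint q (real k + b)) * y"
    for k y
    using qint_add[OF q, of "real k + b" "real n - real k + a"] unfolding N_def
    by (simp add: algebra_simps)
  have pascal: "?g' (i - k) * (qint q N - qint q (real k + b)) + ?g' (Suc i - k) * qint q (real k + b)
      = ?g (Suc i - k) * qint q (real (Suc i) + b)" if "k \<le> i" for k
    using qbin_coeff_pascal[OF q, of N "i - k" "real k + b"] that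
    by (simp add: Suc_diff_le add.assoc)
  have "(\<Sum>k\<le>Suc i. ?g' (Suc i - k) * qE a b q (Suc n) k)
     = (\<Sum>k\<le>Suc i. ?g' (Suc i - k) * (if k = 0 then 0 else q powr (b + real k - 1)
          * qint q (real (Suc n) - real k + a) * ?E (k - 1)))
       + (\<Sum>k\<le>Suc i. ?g' (Suc i - k) * qint q (real k + b) * ?E k)"
    unfolding qE_Suc by (simp add: distrib_left sum.distrib mult.assoc)
  also have "\<dots> = (\<Sum>k\<le>i. (?g' (i - k) * (qint q N - qint q (real k + b))
          + ?g' (Suc i - k) * qint q (real k + b)) * ?E k)
       + qint q (real (Suc i) + b) * ?E (Suc i)"
    by (subst sum.atMost_Suc_shift) (simp add: shift mult.assoc sum.distrib distrib_right)
  also have "\<dots> = (\<Sum>k\<le>i. ?g (Suc i - k) * qint q (real (Suc i) + b) * ?E k)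
       + qint q (real (Suc i) + b) * ?E (Suc i)"
    by (simp add: pascal)
  also have "\<dots> = (\<Sum>k\<le>Suc i. ?g (Suc i - k) * ?E k) * qint q (real (Suc i) + b)"
    by (simp add: sum_distrib_left sum_distrib_right algebra_simps del: qE.simps)
  finally show ?thesis unfolding Suc N_def .
qed

lemma qE_convolution:
  assumes q: "0 < q" "q \<noteq> 1"
  shows "(\<Sum>k\<le>j. qbin_coeff q (real n + a + b) (j - k) * qE a b q n k)
       = qbin_coeff q (a + b) j * qint q (real j + b) ^ n"
proof (induction n arbitrary: j)
  case 0
  have "(\<Sum>k\<le>j. qbin_coeff q (a + b) (j - k) * qE a b q 0 k) = qbin_coeff q (a + b) j"
    by (simp add: sum.atMost_shift del: sum.atMost_Suc)
  then show ?case by simp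
next
  case (Suc n)
  then show ?case
    using qE_Suc_convolution[OF q, of n a b j] by (simp add: add_ac)
qed

text \<open>The coefficient of \<open>x^m\<close> in \<open>(x;q)\<^sub>N\<close> (Cauchy's q-binomial theorem).\<close>
definition qpoch_coeff :: "real \<Rightarrow> real \<Rightarrow> nat \<Rightarrow> real" where
  "qpoch_coeff q N m = qbinom q N m * (-1) ^ m * q ^ (m choose 2)"

lemma qpoch_coeff_Suc:
  assumes q: "0 < q" "q \<noteq> 1"
  shows "qpoch_coeff q N (Suc m) * (1 - q ^ Suc m) = qpoch_coeff q N m * (q powr N - q ^ m)"
proof -
  have num: "qpoch_fin (q powr (N - real (Suc m) + 1)) q (Suc m)
     = (1 - q powr (N - real m)) * qpoch_fin (q powr (N - real m + 1)) q m"
  proof -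
    have shift: "q powr (N - real (Suc m) + 1) * q ^ Suc i = q powr (N - real m + 1) * q ^ i" for i
      using q by (simp add: powr_add powr_diff field_simps)
    have first: "q powr (N - real (Suc m) + 1) * q ^ 0 = q powr (N - real m)"
      using q by (simp add: powr_add powr_diff field_simps)
    show ?thesis unfolding qpoch_fin_def prod.lessThan_Suc_shift shift first ..
  qed
  have den: "qpoch_fin q q (Suc m) = qpoch_fin q q m * (1 - q ^ Suc m)"
    unfolding qpoch_fin_def by simp
  have choose: "Suc m choose 2 = (m choose 2) + m"
    by (cases m) (simp_all add: choose_two)
  have pw: "q powr (N - real m) = q powr N / q ^ m"
    using q by (simp add: powr_diff powr_realpow)
  show ?thesis
    unfolding qpoch_coeff_def qbinom_def num den choose power_add pw
    using q qpoch_fin_q_neq_0[OF q, of m] power_neq_one[OF q, of "Suc m"]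
    by (simp add: field_simps)
qed

lemma fps_mult_one_minus_cX_nth:
  fixes f :: "'a::comm_ring_1 fps"
  shows "fps_nth (f * (1 - fps_const c * fps_X)) n = fps_nth f n - (if n = 0 then 0 else c * fps_nth f (n - 1))"
proof -
  have "f * (1 - fps_const c * fps_X) = f - fps_const c * (fps_X * f)"
    by (simp add: right_diff_distrib mult.commute mult.left_commute)
  then show ?thesis by simp
qed

lemma qbin_coeff_fps_functional_eq:
  assumes q: "0 < q" "q \<noteq> 1"
  shows "Abs_fps (qbin_coeff q N) * (1 - fps_X)
       = (Abs_fps (qbin_coeff q N) oo (fps_const q * fps_X)) * (1 - fps_const (q powr N) * fps_X)"
proof (rule fps_ext)
  fix n
  show "fps_nth (Abs_fps (qbin_coeff q N) * (1 - fps_X)) n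
      = fps_nth ((Abs_fps (qbin_coeff q N) oo (fps_const q * fps_X)) * (1 - fps_const (q powr N) * fps_X)) n"
    using qbin_coeff_Suc[OF q, of N "n - 1"]
    unfolding fps_mult_one_minus_cX_nth fps_mult_one_minus_cX_nth[where c = 1, simplified] fps_compose_linear
    by (cases n) (simp_all add: algebra_simps)
qed

lemma qpoch_coeff_fps_functional_eq:
  assumes q: "0 < q" "q \<noteq> 1"
  shows "Abs_fps (qpoch_coeff q N) * (1 - fps_const (q powr N) * fps_X)
       = (Abs_fps (qpoch_coeff q N) oo (fps_const q * fps_X)) * (1 - fps_X)"
proof (rule fps_ext)
  fix n
  show "fps_nth (Abs_fps (qpoch_coeff q N) * (1 - fps_const (q powr N) * fps_X)) n
      = fps_nth ((Abs_fps (qpoch_coeff q N) oo (fps_const q * fps_X)) * (1 - fps_X)) n"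
    using qpoch_coeff_Suc[OF q, of N "n - 1"]
    unfolding fps_mult_one_minus_cX_nth fps_mult_one_minus_cX_nth[where c = 1, simplified] fps_compose_linear
    by (cases n) (simp_all add: algebra_simps)
qed

lemma fps_compose_linear_fixed_imp_const:
  fixes f :: "'a::idom fps"
  assumes fixed: "f oo (fps_const c * fps_X) = f" and c: "\<And>n. 0 < n \<Longrightarrow> c ^ n \<noteq> 1"
  shows "f = fps_const (fps_nth f 0)"
proof (rule fps_ext)
  fix n
  show "fps_nth f n = fps_nth (fps_const (fps_nth f 0)) n"
  proof (cases n)
    case (Suc m)
    have "c ^ n * fps_nth f n = fps_nth f n"
      using arg_cong[OF fixed, of "\<lambda>g. fps_nth g n"] by (simp add: fps_compose_linear)
    then show ?thesis using c[of n] Suc by (simp add: mult_cancel_right1[of 1, symmetric])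
  qed simp
qed

lemma qbin_coeff_fps_inverse:
  assumes q: "0 < q" "q \<noteq> 1"
  shows "Abs_fps (qbin_coeff q N) * Abs_fps (qpoch_coeff q N) = 1"
proof -
  let ?B = "Abs_fps (qbin_coeff q N)" and ?A = "Abs_fps (qpoch_coeff q N)"
  let ?s = "\<lambda>f. f oo (fps_const q * fps_X)"
  let ?L = "(1 - fps_X) * (1 - fps_const (q powr N) * fps_X) :: real fps"
  have "(?B * ?A) * ?L = (?B * (1 - fps_X)) * (?A * (1 - fps_const (q powr N) * fps_X))"
    by (simp add: algebra_simps)
  also have "\<dots> = ?s (?B * ?A) * ?L"
    unfolding qbin_coeff_fps_functional_eq[OF q] qpoch_coeff_fps_functional_eq[OF q]
    by (simp add: fps_compose_mult_distrib algebra_simps)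
  finally have "(?B * ?A) * ?L = ?s (?B * ?A) * ?L" .
  moreover have "fps_nth ?L 0 = 1"
    by simp
  ultimately have "?s (?B * ?A) = ?B * ?A"
    by (metis mult_right_cancel one_neq_zero fps_zero_nth)
  then have "?B * ?A = fps_const (fps_nth (?B * ?A) 0)"
    by (rule fps_compose_linear_fixed_imp_const) (use power_neq_one[OF q] in blast)
  then show ?thesis
    by (simp add: qpoch_coeff_def qbinom_def qpoch_fin_def binomial_eq_0)
qed

lemma qE_eq_sum_qpoch_coeff:
  assumes q: "0 < q" "q \<noteq> 1"
  shows "qE a b q n k
       = (\<Sum>j\<le>k. qpoch_coeff q (real n + a + b) (k - j) * qbin_coeff q (a + b) j * qint q (real j + b) ^ n)"
proof -
  let ?N = "real n + a + b"
  let ?E = "Abs_fps (qE a b q n)"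
  have conv: "fps_nth (?E * Abs_fps (qbin_coeff q ?N)) j = qbin_coeff q (a + b) j * qint q (real j + b) ^ n" for j
    using qE_convolution[OF q, of n a b j]
    by (simp add: fps_mult_nth atLeast0AtMost mult.commute)
  have "qE a b q n k = fps_nth (?E * (Abs_fps (qbin_coeff q ?N) * Abs_fps (qpoch_coeff q ?N))) k"
    by (simp add: qbin_coeff_fps_inverse[OF q])
  also have "\<dots> = fps_nth ((?E * Abs_fps (qbin_coeff q ?N)) * Abs_fps (qpoch_coeff q ?N)) k"
    by (simp add: mult.assoc)
  also have "\<dots> = (\<Sum>j\<le>k. qpoch_coeff q ?N (k - j) * qbin_coeff q (a + b) j * qint q (real j + b) ^ n)"
    unfolding fps_mult_nth[of "?E * Abs_fps (qbin_coeff q ?N)"] atLeast0AtMost conv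
    by (simp add: ac_simps)
  finally show ?thesis .
qed

lemma abs_mult_power_less_1:
  fixes q z :: real
  assumes "0 < q" "q < 1" "\<bar>z\<bar> < 1"
  shows "\<bar>z * q ^ i\<bar> < 1"
proof -
  have "\<bar>z * q ^ i\<bar> \<le> \<bar>z\<bar>"
    using assms by (simp add: abs_mult power_le_one mult_left_le)
  then show ?thesis using assms by linarith
qed

lemma convergent_prod_qpoch:
  fixes q z :: real
  assumes q: "0 < q" "q < 1" and z: "\<bar>z\<bar> < 1"
  shows "convergent_prod (\<lambda>i. 1 - z * q ^ i)"
proof -
  have "summable (\<lambda>i. \<bar>- (z * q ^ i)\<bar>)"
    using q by (simp add: abs_mult power_abs summable_mult summable_geometric)
  moreover have "- (z * q ^ i) \<noteq> -1" for i
    using abs_mult_power_less_1[OF assms, of i] by auto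
  ultimately show ?thesis
    using summable_imp_convergent_prod_real[of "\<lambda>i. - (z * q ^ i)"] by simp
qed

lemma qpoch_fin_LIMSEQ:
  assumes "0 < q" "q < 1" "\<bar>z\<bar> < 1"
  shows "(\<lambda>K. qpoch_fin z q K) \<longlonglongrightarrow> qpoch_inf z q"
proof -
  have "(\<lambda>n. \<Prod>i\<le>n. 1 - z * q ^ i) \<longlonglongrightarrow> qpoch_inf z q"
    unfolding qpoch_inf_def by (rule convergent_prod_LIMSEQ[OF convergent_prod_qpoch[OF assms]])
  then have "(\<lambda>n. qpoch_fin z q (Suc n)) \<longlonglongrightarrow> qpoch_inf z q"
    by (simp add: qpoch_fin_def lessThan_Suc_atMost)
  then show ?thesis by (rule LIMSEQ_imp_Suc)
qed

lemma qpoch_inf_neq_0: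
  assumes "0 < q" "q < 1" "\<bar>z\<bar> < 1"
  shows "qpoch_inf z q \<noteq> 0"
proof -
  have "1 - z * q ^ i \<noteq> 0" for i
    using abs_mult_power_less_1[OF assms, of i] by auto
  then show ?thesis
    unfolding qpoch_inf_def by (intro prodinf_nonzero[OF convergent_prod_qpoch[OF assms]])
qed

lemma summable_qbin_coeff_abs:
  assumes q: "0 < q" "q < 1" and y: "\<bar>y\<bar> < 1"
  shows "summable (\<lambda>m. \<bar>qbin_coeff q M m * y ^ m\<bar>)"
proof -
  define c where "c = (1 + \<bar>y\<bar>) / 2"
  have c: "c < 1" "\<bar>y\<bar> < c" using y unfolding c_def by auto
  define r where "r m = \<bar>1 - q powr M * q ^ m\<bar> / (1 - q ^ Suc m) * \<bar>y\<bar>" for m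
  have q0: "(\<lambda>m. q ^ m) \<longlonglongrightarrow> 0" using q by (intro LIMSEQ_power_zero) simp
  then have "(\<lambda>m. q ^ Suc m) \<longlonglongrightarrow> 0" using LIMSEQ_Suc[OF q0] by simp
  with q0 have "r \<longlonglongrightarrow> \<bar>1 - q powr M * 0\<bar> / (1 - 0) * \<bar>y\<bar>"
    unfolding r_def using q by (intro tendsto_intros) auto
  then have "eventually (\<lambda>m. r m < c) sequentially"
    using c by (intro order_tendstoD(2)) simp_all
  then obtain m0 where m0: "\<And>m. m \<ge> m0 \<Longrightarrow> r m < c" by (auto simp: eventually_sequentially)
  show ?thesis
  proof (rule summable_ratio_test[OF c(1), of m0])
    fix m assume "m0 \<le> m"
    have pos: "0 < 1 - q ^ Suc m" using q power_strict_decreasing[of 0 "Suc m" q] by simp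
    have "qbin_coeff q M (Suc m) = qbin_coeff q M m * (1 - q powr M * q ^ m) / (1 - q ^ Suc m)"
      using qbin_coeff_Suc[of q M m] q pos by (simp add: field_simps)
    then have "norm \<bar>qbin_coeff q M (Suc m) * y ^ Suc m\<bar> = \<bar>qbin_coeff q M m * y ^ m\<bar> * r m"
      unfolding r_def using pos by (simp add: abs_mult abs_divide)
    also have "\<dots> \<le> \<bar>qbin_coeff q M m * y ^ m\<bar> * c"
      using m0[OF \<open>m0 \<le> m\<close>] by (intro mult_left_mono) auto
    finally show "norm \<bar>qbin_coeff q M (Suc m) * y ^ Suc m\<bar> \<le> c * norm \<bar>qbin_coeff q M m * y ^ m\<bar>"
      by (simp add: mult.commute)
  qed
qed

lemma sums_mult_one_minus_linear:
  fixes g :: "nat \<Rightarrow> real"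
  assumes "summable (\<lambda>m. g m * y ^ m)"
  shows "(\<lambda>m. (g m - (if m = 0 then 0 else c * g (m - 1))) * y ^ m)
           sums ((\<Sum>m. g m * y ^ m) * (1 - c * y))"
proof -
  let ?S = "\<Sum>m. g m * y ^ m"
  define F where "F m = (if m = 0 then 0 else c * g (m - 1) * y ^ m)" for m
  have S: "(\<lambda>m. g m * y ^ m) sums ?S" using assms by (rule summable_sums)
  have "(\<lambda>m. F (Suc m)) sums (c * y * ?S)"
    unfolding F_def using sums_mult[OF S, of "c * y"] by (simp add: ac_simps)
  then have "F sums (c * y * ?S)"
    using sums_Suc_iff[of F] by (simp add: F_def)
  from sums_diff[OF S this]
  have "(\<lambda>m. g m * y ^ m - F m) sums (?S * (1 - c * y))"
    by (simp add: algebra_simps)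
  moreover have "g m * y ^ m - F m = (g m - (if m = 0 then 0 else c * g (m - 1))) * y ^ m" for m
    by (simp add: F_def algebra_simps)
  ultimately show ?thesis by simp
qed

lemma qbin_series_functional_eq:
  assumes q: "0 < q" "q < 1" and y: "\<bar>y\<bar> < 1"
  shows "(\<Sum>m. qbin_coeff q M m * y ^ m) * (1 - y)
       = (\<Sum>m. qbin_coeff q M m * (q * y) ^ m) * (1 - q powr M * y)"
proof -
  let ?g = "qbin_coeff q M"
  have qy: "\<bar>y * q ^ 1\<bar> < 1" by (rule abs_mult_power_less_1[OF q y])
  have "summable (\<lambda>m. ?g m * y ^ m)" "summable (\<lambda>m. (?g m * q ^ m) * y ^ m)"
    using summable_rabs_cancel[OF summable_qbin_coeff_abs[OF q y]]
      summable_rabs_cancel[OF summable_qbin_coeff_abs[OF q qy]]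
    by (simp_all add: power_mult_distrib ac_simps)
  note summable = this
  have L: "(\<lambda>m. (?g m - (if m = 0 then 0 else 1 * ?g (m - 1))) * y ^ m) sums ((\<Sum>m. ?g m * y ^ m) * (1 - y))"
    using sums_mult_one_minus_linear[OF summable(1), of 1] by simp
  have R: "(\<lambda>m. (?g m * q ^ m - (if m = 0 then 0 else q powr M * (?g (m - 1) * q ^ (m - 1)))) * y ^ m)
        sums ((\<Sum>m. ?g m * q ^ m * y ^ m) * (1 - q powr M * y))"
    using sums_mult_one_minus_linear[OF summable(2), of "q powr M"] by simp
  have "?g m - (if m = 0 then 0 else 1 * ?g (m - 1))
      = ?g m * q ^ m - (if m = 0 then 0 else q powr M * (?g (m - 1) * q ^ (m - 1)))" for m
    using qbin_coeff_Suc[of q M "m - 1"] q by (cases m) (simp_all add: algebra_simps)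
  with L R have "(\<Sum>m. ?g m * y ^ m) * (1 - y) = (\<Sum>m. ?g m * q ^ m * y ^ m) * (1 - q powr M * y)"
    using sums_unique2 by simp
  then show ?thesis by (simp add: power_mult_distrib mult.assoc)
qed

lemma q_binomial_theorem:
  assumes q: "0 < q" "q < 1" and x: "\<bar>x\<bar> < 1" and xM: "\<bar>x\<bar> * q powr M < 1"
  shows "(\<lambda>m. qbin_coeff q M m * x ^ m) sums (1 / qpoch x q M)"
proof -
  define S where "S y = (\<Sum>m. qbin_coeff q M m * y ^ m)" for y
  have summable: "summable (\<lambda>m. qbin_coeff q M m * y ^ m)" if "\<bar>y\<bar> < 1" for y
    using summable_rabs_cancel[OF summable_qbin_coeff_abs[OF q that]] .
  \<comment> \<open>iterate the functional equation, then let \<open>K \<rightarrow> \<infinity>\<close>, using \<open>S (x * q ^ K) \<rightarrow> S 0 = 1\<close>\<close>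
  have iter: "S x * qpoch_fin x q K = S (x * q ^ K) * qpoch_fin (x * q powr M) q K" for K
  proof (induction K)
    case (Suc K)
    have "\<bar>x * q ^ K\<bar> < 1" by (rule abs_mult_power_less_1[OF q x])
    then have fe: "S (x * q ^ K) * (1 - x * q ^ K) = S (x * q ^ Suc K) * (1 - x * q powr M * q ^ K)"
      using qbin_series_functional_eq[OF q, of "x * q ^ K" M]
      unfolding S_def by (simp add: ac_simps)
    have "S x * qpoch_fin x q (Suc K) = S x * qpoch_fin x q K * (1 - x * q ^ K)"
      by (simp add: qpoch_fin_def mult.assoc)
    also have "\<dots> = qpoch_fin (x * q powr M) q K * (S (x * q ^ K) * (1 - x * q ^ K))"
      by (simp add: Suc.IH)
    also have "\<dots> = S (x * q ^ Suc K) * qpoch_fin (x * q powr M) q (Suc K)"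
      by (simp add: fe qpoch_fin_def)
    finally show ?case .
  qed (simp add: qpoch_fin_def)
  have xu: "\<bar>x * q powr M\<bar> < 1" using xM q by (simp add: abs_mult)
  have cont: "isCont S 0"
    unfolding S_def by (rule isCont_powser[of _ "1/2"]) (use summable[of "1/2"] in auto)
  have "(\<lambda>K. x * q ^ K) \<longlonglongrightarrow> x * 0" using q by (intro tendsto_intros LIMSEQ_power_zero) simp
  then have "(\<lambda>K. S (x * q ^ K)) \<longlonglongrightarrow> S 0"
    using isCont_tendsto_compose[OF cont] by simp
  then have "(\<lambda>K. S (x * q ^ K) * qpoch_fin (x * q powr M) q K) \<longlonglongrightarrow> 1 * qpoch_inf (x * q powr M) q"
    unfolding S_def by (intro tendsto_intros qpoch_fin_LIMSEQ[OF q xu]) simp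
  moreover have "(\<lambda>K. S x * qpoch_fin x q K) \<longlonglongrightarrow> S x * qpoch_inf x q"
    by (intro tendsto_intros qpoch_fin_LIMSEQ[OF q x])
  ultimately have "S x * qpoch_inf x q = qpoch_inf (x * q powr M) q"
    unfolding iter by (simp add: LIMSEQ_unique)
  then have "S x = 1 / qpoch x q M"
    using qpoch_inf_neq_0[OF q x] unfolding qpoch_def by (simp add: field_simps)
  then show ?thesis using summable_sums[OF summable[OF x]] unfolding S_def by simp
qed

lemma qEpoly_div_qpoch_sums:
  assumes q: "0 < q" "q < 1" and x: "\<bar>x\<bar> < 1" and xN: "\<bar>x\<bar> * q powr (real n + a + b) < 1"
  shows "(\<lambda>j. x ^ j * qbin_coeff q (a + b) j * qint q (real j + b) ^ n)
           sums (qEpoly a b q n x / qpoch x q (real n + a + b))"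
proof -
  let ?N = "real n + a + b"
  define e where "e k = qE a b q n k * x ^ k" for k
  define g where "g m = qbin_coeff q ?N m * x ^ m" for m
  have e0: "e k = 0" if "k \<notin> {..n}" for k
    using that unfolding e_def by (simp add: qE_eq_0)
  have "summable (\<lambda>k. norm (e k))"
    by (rule summable_finite[of "{..n}"]) (use e0 in auto)
  moreover have "summable (\<lambda>m. norm (g m))"
    unfolding g_def using summable_qbin_coeff_abs[OF q x] by simp
  ultimately have "(\<lambda>j. \<Sum>k\<le>j. e k * g (j - k)) sums ((\<Sum>k. e k) * (\<Sum>m. g m))"
    by (rule Cauchy_product_sums)
  moreover have "(\<Sum>k. e k) = qEpoly a b q n x"
  proof -
    have "(\<Sum>k. e k) = (\<Sum>k\<le>n. e k)" using suminf_finite[of "{..n}" e] e0 by auto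
    then show ?thesis by (simp add: qEpoly_def e_def)
  qed
  moreover have "(\<Sum>m. g m) = 1 / qpoch x q ?N"
    unfolding g_def using q_binomial_theorem[OF q x xN] by (simp add: sums_iff)
  moreover have "(\<Sum>k\<le>j. e k * g (j - k)) = x ^ j * qbin_coeff q (a + b) j * qint q (real j + b) ^ n" for j
  proof -
    have "(\<Sum>k\<le>j. e k * g (j - k)) = x ^ j * (\<Sum>k\<le>j. qbin_coeff q ?N (j - k) * qE a b q n k)"
      unfolding sum_distrib_left e_def g_def
      by (rule sum.cong[OF refl]) (auto simp: power_add[symmetric] ac_simps)
    then show ?thesis using qE_convolution[of q n a b j] q by simp
  qed
  ultimately show ?thesis by simp
qed

lemma qint_abs_le:
  assumes q: "0 < q" "q < 1"
  shows "\<bar>qint q (real j + b)\<bar> \<le> (1 + q powr b) / (1 - q)"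
proof -
  have "q powr (real j + b) = q ^ j * q powr b" using q by (simp add: powr_add powr_realpow)
  moreover have "q ^ j * q powr b \<le> q powr b" using q by (simp add: power_le_one mult_left_le_one_le)
  moreover have "0 \<le> q ^ j * q powr b" using q by simp
  ultimately have "\<bar>1 - q powr (real j + b)\<bar> \<le> 1 + q powr b" by linarith
  then show ?thesis unfolding qint_def using q by (simp add: abs_divide divide_right_mono)
qed

lemma exp_series_interchange:
  fixes w c :: "nat \<Rightarrow> real"
  assumes w: "summable (\<lambda>j. \<bar>w j\<bar>)" and c: "\<And>j. \<bar>c j\<bar> \<le> C"
  shows "summable (\<lambda>j. w j * exp (c j * t))"
    and "(\<lambda>n. (\<Sum>j. w j * c j ^ n) * t ^ n / fact n) sums (\<Sum>j. w j * exp (c j * t))"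
proof -
  define f where "f p = w (fst p) * (c (fst p) * t) ^ snd p / fact (snd p)" for p
  have exp_sums: "(\<lambda>n. z ^ n / fact n) sums exp z" for z :: real
    using exp_converges[of z] by (simp add: divide_inverse_commute scaleR_conv_of_real)
  have row: "(\<lambda>n. f (j, n)) sums (w j * exp (c j * t))" for j
    unfolding f_def using sums_mult[OF exp_sums[of "c j * t"], of "w j"] by (simp add: ac_simps)
  have row_abs: "(\<lambda>n. \<bar>f (j, n)\<bar>) sums (\<bar>w j\<bar> * exp \<bar>c j * t\<bar>)" for j
    unfolding f_def using sums_mult[OF exp_sums[of "\<bar>c j * t\<bar>"], of "\<bar>w j\<bar>"]
    by (simp add: abs_mult abs_divide power_abs ac_simps)
  have summable_row_bound: "summable (\<lambda>j. \<bar>w j\<bar> * exp \<bar>c j * t\<bar>)"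
  proof (rule summable_comparison_test'[OF summable_mult2[OF w, of "exp (C * \<bar>t\<bar>)"]])
    fix j
    have "\<bar>c j * t\<bar> \<le> C * \<bar>t\<bar>" using c[of j] by (simp add: abs_mult mult_right_mono)
    then show "norm (\<bar>w j\<bar> * exp \<bar>c j * t\<bar>) \<le> \<bar>w j\<bar> * exp (C * \<bar>t\<bar>)"
      by (simp add: mult_left_mono)
  qed
  have "(\<lambda>p. norm (f p)) summable_on UNIV \<times> UNIV"
  proof (rule summable_on_SigmaI)
    show "((\<lambda>n. norm (f (j, n))) has_sum \<bar>w j\<bar> * exp \<bar>c j * t\<bar>) UNIV" for j
      using sums_nonneg_imp_has_sum[OF row_abs] by simp
    show "(\<lambda>j. \<bar>w j\<bar> * exp \<bar>c j * t\<bar>) summable_on UNIV"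
      by (rule summable_nonneg_imp_summable_on[OF summable_row_bound]) simp
  qed simp
  then have "f summable_on UNIV \<times> UNIV"
    by (rule abs_summable_summable)
  then have f: "(f has_sum infsum f UNIV) (UNIV \<times> UNIV)"
    using has_sum_infsum by simp
  have "((\<lambda>j. w j * exp (c j * t)) has_sum infsum f UNIV) UNIV"
  proof (rule has_sum_Sigma'[OF f])
    fix j
    have "summable (\<lambda>n. norm (f (j, n)))" using row_abs[of j] by (simp add: sums_iff)
    then show "((\<lambda>n. f (j, n)) has_sum w j * exp (c j * t)) UNIV"
      by (rule norm_summable_imp_has_sum[OF _ row])
  qed
  then have rows: "(\<lambda>j. w j * exp (c j * t)) sums infsum f UNIV"
    by (rule has_sum_imp_sums)
  have "((\<lambda>n. (\<Sum>j. w j * c j ^ n) * t ^ n / fact n) has_sum infsum f UNIV) UNIV"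
  proof (rule has_sum_Sigma'[of "\<lambda>p. f (snd p, fst p)"])
    show "((\<lambda>p. f (snd p, fst p)) has_sum infsum f UNIV) (UNIV \<times> UNIV)"
      using has_sum_swap[THEN iffD1, OF f] by (simp add: case_prod_unfold)
    fix n
    have bound: "\<bar>w j * c j ^ n\<bar> \<le> \<bar>w j\<bar> * C ^ n" for j
      using c[of j] by (simp add: abs_mult power_abs mult_left_mono power_mono)
    have abs_summable: "summable (\<lambda>j. \<bar>w j * c j ^ n\<bar>)"
      by (rule summable_comparison_test'[OF summable_mult2[OF w, of "C ^ n"]]) (simp add: bound)
    then have "summable (\<lambda>j. norm (f (j, n)))"
      using summable_mult2[OF abs_summable, of "\<bar>t\<bar> ^ n / fact n"] unfolding f_def
      by (simp add: abs_mult abs_divide power_abs power_mult_distrib ac_simps)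
    moreover have "(\<lambda>j. f (j, n)) sums ((\<Sum>j. w j * c j ^ n) * t ^ n / fact n)"
      using sums_mult2[OF summable_sums[OF summable_rabs_cancel[OF abs_summable]], of "t ^ n / fact n"]
      unfolding f_def by (simp add: power_mult_distrib ac_simps)
    ultimately show "((\<lambda>j. f (snd (n, j), fst (n, j))) has_sum (\<Sum>j. w j * c j ^ n) * t ^ n / fact n) UNIV"
      by (simp add: norm_summable_imp_has_sum)
  qed
  then have "(\<lambda>n. (\<Sum>j. w j * c j ^ n) * t ^ n / fact n) sums infsum f UNIV"
    by (rule has_sum_imp_sums)
  with rows show "summable (\<lambda>j. w j * exp (c j * t))"
    and "(\<lambda>n. (\<Sum>j. w j * c j ^ n) * t ^ n / fact n) sums (\<Sum>j. w j * exp (c j * t))"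
    by (simp_all add: sums_iff)
qed

lemma qEpoly_exp_generating_function:
  assumes q: "0 < q" "q < 1" and x: "\<bar>x\<bar> < 1" and xab: "\<bar>x\<bar> * q powr (a + b) < 1"
  shows "summable (\<lambda>j. x ^ j * qbin_coeff q (a + b) j * exp (qint q (real j + b) * t))"
    and "(\<lambda>n. qEpoly a b q n x / qpoch x q (real n + a + b) * t ^ n / fact n)
           sums (\<Sum>j. x ^ j * qbin_coeff q (a + b) j * exp (qint q (real j + b) * t))"
proof -
  define w where "w j = x ^ j * qbin_coeff q (a + b) j" for j
  have w: "summable (\<lambda>j. \<bar>w j\<bar>)"
    unfolding w_def using summable_qbin_coeff_abs[OF q x] by (simp add: ac_simps)
  have "(\<Sum>j. w j * qint q (real j + b) ^ n) = qEpoly a b q n x / qpoch x q (real n + a + b)" for n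
  proof -
    have "q powr (real n + a + b) = q ^ n * q powr (a + b)"
      using q by (simp add: powr_add powr_realpow add.assoc)
    also have "\<dots> \<le> q powr (a + b)"
      using q by (simp add: power_le_one mult_left_le_one_le)
    finally have "q powr (real n + a + b) \<le> q powr (a + b)" .
    then have "\<bar>x\<bar> * q powr (real n + a + b) < 1"
      using xab by (meson abs_ge_zero le_less_trans mult_left_mono)
    from qEpoly_div_qpoch_sums[OF q x this] show ?thesis
      unfolding w_def by (simp add: sums_iff)
  qed
  with exp_series_interchange[of w "\<lambda>j. qint q (real j + b)" _ t, OF w qint_abs_le[OF q]] show
    "summable (\<lambda>j. x ^ j * qbin_coeff q (a + b) j * exp (qint q (real j + b) * t))"
    "(\<lambda>n. qEpoly a b q n x / qpoch x q (real n + a + b) * t ^ n / fact n)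
       sums (\<Sum>j. x ^ j * qbin_coeff q (a + b) j * exp (qint q (real j + b) * t))"
    unfolding w_def by simp_all
qed

theorem theorem1p2:
  fixes a b :: real
  shows
  "(\<forall>q x n. 0 < q \<and> q \<noteq> 1 \<and> n \<ge> 1 \<longrightarrow>
      qEpoly a b q n x =
        (qint q b + q powr b * qint q (real n - 1 + a) * x) * qEpoly a b q (n - 1) x
        + (1 - x) * x * q powr b * qderiv q (\<lambda>y. qEpoly a b q (n - 1) y) x)
   \<and> (\<forall>q x n. 0 < q \<and> q < 1 \<and> \<bar>x\<bar> < 1 \<and> \<bar>x\<bar> * q powr (real n + a + b) < 1 \<longrightarrow>
      (\<lambda>j. x ^ j * qbinom q (real j + a + b - 1) j * qint q (real j + b) ^ n)
        sums (qEpoly a b q n x / qpoch x q (real n + a + b)))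
   \<and> (\<forall>q x t. 0 < q \<and> q < 1 \<and> \<bar>x\<bar> < 1 \<and> \<bar>x\<bar> * q powr (a + b) < 1 \<longrightarrow>
      summable (\<lambda>j. x ^ j * qbinom q (real j + a + b - 1) j * exp (qint q (real j + b) * t))
      \<and> (\<lambda>n. qEpoly a b q n x / qpoch x q (real n + a + b) * t ^ n / fact n)
          sums (\<Sum>j. x ^ j * qbinom q (real j + a + b - 1) j * exp (qint q (real j + b) * t)))
   \<and> (\<forall>q n j. 0 < q \<and> q \<noteq> 1 \<longrightarrow>
      (\<Sum>k\<le>j. qbinom q (real j - real k + real n + a + b - 1) (j - k) * qE a b q n k)
        = qbinom q (real j + a + b - 1) j * qint q (real j + b) ^ n)
   \<and> (\<forall>q n k. 0 < q \<and> q \<noteq> 1 \<and> k \<le> n \<longrightarrow>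
      qE a b q n k =
        (\<Sum>j\<le>k. qbinom q (real n + a + b) (k - j) * qbinom q (real j + a + b - 1) j
           * (-1) ^ (k - j) * q ^ ((k - j) choose 2) * qint q (b + real j) ^ n))"
proof -
  have qbinom_j: "qbinom q (real j + a + b - 1) j = qbin_coeff q (a + b) j" for q j
    using qbinom_eq_qbin_coeff[of q j "a + b"] by (simp add: add.assoc)
  have qbinom_jk: "qbinom q (real j - real k + real n + a + b - 1) (j - k)
      = qbin_coeff q (real n + a + b) (j - k)" if "k \<le> j" for q j k n
    using qbinom_eq_qbin_coeff[of q "j - k" "real n + a + b"] that
    by (simp add: of_nat_diff algebra_simps)
  show ?thesis
    unfolding qbinom_j
    apply (intro conjI allI impI; elim conjE)
    subgoal for q x n using qEpoly_Suc[of q a b "n - 1" x] by (simp add: of_nat_diff)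
    subgoal using qEpoly_div_qpoch_sums by blast
    subgoal using qEpoly_exp_generating_function(1) by blast
    subgoal using qEpoly_exp_generating_function(2) by blast
    subgoal for q n j using qE_convolution[of q n a b j] by (simp add: qbinom_jk)
    subgoal for q n k using qE_eq_sum_qpoch_coeff[of q a b n k] by (simp add: qpoch_coeff_def ac_simps)
    done
qed

end
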